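(* Let $G$ be a hybrid graph. If the density matrix $\rho(G)$ is separable and the partial transpose graph $G^\Gamma$ is a NOI-graph or a COI-graph, then $D(G)=D(G^\Gamma)$.
   Context: A hybrid graph $G=(V,E_L+E_Q)$ is a grid-labelled graph (vertices $(i,j)$ on a grid, vertex $(i,j)$ identified with $|ij\rangle\in\mathbb{C}^{m_1}\otimes\mathbb{C}^{m_2}$) with a set $E_L$ of $L$-edges and a set $E_Q$ of $Q$-edges; an $L$-edge $\{(i,j),(k,l)\}$ has state $\frac1{\sqrt2}(|ij\rangle-|kl\rangle)$, a $Q$-edge has state $\frac1{\sqrt2}(|ij\rangle+|kl\rangle)$. Its hybrid Laplacian is $\mathcal{L}(G)=L(S_l)+Q(S_q)$, where $S_l=(V,E_L)$, $S_q=(V,E_Q)$, $L=D-A$ is the signed and $Q=D+A$ the signless Laplacian; $\rho(G)$ is the normalized $\mathcal{L}(G)$, i.e. the equal mixture of all edge-state projectors. $D(G)$ is the diagonal matrix of vertex degrees counting edges of both types. The partial transpose graph $G^\Gamma$ has the same vertex set and contains the edge $\{(i,l),(k,j)\}$ of a given type iff $G$ contains the edge $\{(i,j),(k,l)\}$ of that type. $G$ is a NOI-graph if its $Q$-subgraph $S_q$ is bipartite and no vertex is incident to both a $Q$-edge and an $L$-edge. $G$ is a COI-graph if $S_q$ is bipartite with a bipartition $(P_1,P_2)$ of $V$ (every $Q$-edge joining $P_1$ to $P_2$) such that every $L$-edge joins two vertices in the same part. *)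

theory Defs
  imports Complex_Main
begin

text \<open>Vertices are grid points (i,j) with i < m1, j < m2; vertex (i,j) is the basis
vector |ij> of C^m1 (x) C^m2.  Matrices on
C^m1 (x) C^m2 are represented as functions of two grid indices (row, column).\<close>

record hgraph =
  EL :: "(nat \<times> nat) set set"
  EQ :: "(nat \<times> nat) set set"

definition grid :: "nat \<Rightarrow> nat \<Rightarrow> (nat \<times> nat) set" where
  "grid m1 m2 = {0..<m1} \<times> {0..<m2}"

definition is_edge_on :: "(nat \<times> nat) set \<Rightarrow> (nat \<times> nat) set \<Rightarrow> bool" where
  "is_edge_on V e \<longleftrightarrow> (\<exists>u v. u \<in> V \<and> v \<in> V \<and> u \<noteq> v \<and> e = {u, v})"

definition hybrid_graph :: "nat \<Rightarrow> nat \<Rightarrow> hgraph \<Rightarrow> bool" where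
  "hybrid_graph m1 m2 G \<longleftrightarrow>
     (\<forall>e \<in> EL G. is_edge_on (grid m1 m2) e) \<and>
     (\<forall>e \<in> EQ G. is_edge_on (grid m1 m2) e) \<and>
     EL G \<inter> EQ G = {}"

definition deg :: "hgraph \<Rightarrow> nat \<times> nat \<Rightarrow> nat" where
  "deg G v = card {e \<in> EL G. v \<in> e} + card {e \<in> EQ G. v \<in> e}"

definition degree_matrix :: "hgraph \<Rightarrow> nat \<times> nat \<Rightarrow> nat \<times> nat \<Rightarrow> real" where
  "degree_matrix G u v = (if u = v then real (deg G u) else 0)"

text \<open>Hybrid Laplacian L(S_l) + Q(S_q) = D(G) - A(S_l) + A(S_q).\<close>
definition hybrid_laplacian :: "hgraph \<Rightarrow> nat \<times> nat \<Rightarrow> nat \<times> nat \<Rightarrow> real" where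
  "hybrid_laplacian G u v =
     degree_matrix G u v
     - (if {u, v} \<in> EL G \<and> u \<noteq> v then 1 else 0)
     + (if {u, v} \<in> EQ G \<and> u \<noteq> v then 1 else 0)"

definition density :: "nat \<Rightarrow> nat \<Rightarrow> hgraph \<Rightarrow> nat \<times> nat \<Rightarrow> nat \<times> nat \<Rightarrow> complex" where
  "density m1 m2 G u v =
     complex_of_real (hybrid_laplacian G u v / (\<Sum>w \<in> grid m1 m2. hybrid_laplacian G w w))"

definition separable :: "nat \<Rightarrow> nat \<Rightarrow> (nat \<times> nat \<Rightarrow> nat \<times> nat \<Rightarrow> complex) \<Rightarrow> bool" where
  "separable m1 m2 \<rho> \<longleftrightarrow>
     (\<exists>(n::nat) (p::nat \<Rightarrow> real) (a::nat \<Rightarrow> nat \<Rightarrow> complex) (b::nat \<Rightarrow> nat \<Rightarrow> complex).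
        (\<forall>t<n. p t \<ge> 0) \<and> (\<Sum>t<n. p t) = 1 \<and>
        (\<forall>t<n. (\<Sum>i<m1. (cmod (a t i))\<^sup>2) = 1 \<and> (\<Sum>j<m2. (cmod (b t j))\<^sup>2) = 1) \<and>
        (\<forall>i<m1. \<forall>j<m2. \<forall>k<m1. \<forall>l<m2.
           \<rho> (i, j) (k, l) =
             (\<Sum>t<n. complex_of_real (p t) * (a t i * b t j) * cnj (a t k * b t l))))"

definition ptrans_edges :: "(nat \<times> nat) set set \<Rightarrow> (nat \<times> nat) set set" where
  "ptrans_edges E = {{(i, l), (k, j)} | i j k l. {(i, j), (k, l)} \<in> E}"

definition ptrans :: "hgraph \<Rightarrow> hgraph" where
  "ptrans G = \<lparr>EL = ptrans_edges (EL G), EQ = ptrans_edges (EQ G)\<rparr>"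

definition q_bipartition :: "(nat \<times> nat) set \<Rightarrow> hgraph \<Rightarrow> (nat \<times> nat) set \<Rightarrow> (nat \<times> nat) set \<Rightarrow> bool" where
  "q_bipartition V G P1 P2 \<longleftrightarrow>
     P1 \<inter> P2 = {} \<and> P1 \<union> P2 = V \<and>
     (\<forall>e \<in> EQ G. \<exists>u \<in> P1. \<exists>v \<in> P2. e = {u, v})"

definition NOI_graph :: "nat \<Rightarrow> nat \<Rightarrow> hgraph \<Rightarrow> bool" where
  "NOI_graph m1 m2 G \<longleftrightarrow>
     (\<exists>P1 P2. q_bipartition (grid m1 m2) G P1 P2) \<and>
     (\<forall>v \<in> grid m1 m2. \<not> ((\<exists>e \<in> EQ G. v \<in> e) \<and> (\<exists>e \<in> EL G. v \<in> e)))"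

definition COI_graph :: "nat \<Rightarrow> nat \<Rightarrow> hgraph \<Rightarrow> bool" where
  "COI_graph m1 m2 G \<longleftrightarrow>
     (\<exists>P1 P2. q_bipartition (grid m1 m2) G P1 P2 \<and>
        (\<forall>e \<in> EL G. (\<exists>u \<in> P1. \<exists>v \<in> P1. e = {u, v}) \<or> (\<exists>u \<in> P2. \<exists>v \<in> P2. e = {u, v})))"

end

theory Submission
  imports Defs "HOL-Library.Complex_Order"
begin

(*
  Partial transposition maps the hybrid Laplacian to
  L(G)^Gamma = Lap(G^Gamma) + D(G) - D(G^Gamma), where Lap is the hybrid Laplacian.
  If G^Gamma is a NOI- or COI-graph, a +-1 vector s that is constant along L-edges and
  changes sign along Q-edges lies in the kernel of Lap(G^Gamma), so
  L(G)^Gamma s = (D(G) - D(G^Gamma)) s.  Partial transposition permutes the ordered pairs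
  of adjacent vertices, so G and G^Gamma have the same degree sum and s is isotropic:
  s^T L(G)^Gamma s = tr (D(G) - D(G^Gamma)) = 0.  Separability makes L(G)^Gamma positive
  semidefinite, an isotropic vector of a positive semidefinite form lies in its kernel,
  and since s has no zero entry, D(G) = D(G^Gamma).
*)

section \<open>Positive semidefinite forms\<close>

lemma nonneg_quadratic_imp_linear_coeff_zero:
  fixes a b :: real
  assumes "\<And>t. 0 \<le> 2 * t * a + t\<^sup>2 * b"
  shows "a = 0"
proof (rule ccontr)
  assume "a \<noteq> 0"
  define c where "c = \<bar>b\<bar> + 1"
  have c: "0 < c" "b - 2 * c < 0"
    unfolding c_def by auto
  have "0 \<le> 2 * (- a / c) * a + (- a / c)\<^sup>2 * b"
    by (rule assms)
  also have "\<dots> = a\<^sup>2 * (b - 2 * c) / c\<^sup>2"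
    using c(1) by (simp add: field_simps power2_eq_square)
  also have "\<dots> < 0"
    using c \<open>a \<noteq> 0\<close> by (simp add: divide_neg_pos mult_pos_neg)
  finally show False by simp
qed

lemma psd_isotropic_in_kernel:
  fixes R :: "'a \<Rightarrow> 'a \<Rightarrow> real"
  assumes fin: "finite V" and v: "v \<in> V" and sym: "\<And>u w. R u w = R w u"
    and psd: "\<And>x. 0 \<le> (\<Sum>u\<in>V. \<Sum>w\<in>V. x u * R u w * x w)"
    and isotropic: "(\<Sum>u\<in>V. \<Sum>w\<in>V. s u * R u w * s w) = 0"
  shows "(\<Sum>w\<in>V. R v w * s w) = 0"
proof (rule nonneg_quadratic_imp_linear_coeff_zero)
  fix t :: real
  define x where "x u = s u + (if u = v then t else 0)" for u
  have "x u * R u w * x w = s u * R u w * s w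
      + (if u = v then t * (R v w * s w) else 0) + (if w = v then t * (R v u * s u) else 0)
      + (if u = v then if w = v then t\<^sup>2 * R v v else 0 else 0)" for u w
    unfolding x_def using sym[of u v] by (auto simp: algebra_simps power2_eq_square)
  then have "(\<Sum>u\<in>V. \<Sum>w\<in>V. x u * R u w * x w) = (\<Sum>u\<in>V. \<Sum>w\<in>V. s u * R u w * s w)
      + (\<Sum>u\<in>V. \<Sum>w\<in>V. if u = v then t * (R v w * s w) else 0)
      + (\<Sum>u\<in>V. \<Sum>w\<in>V. if w = v then t * (R v u * s u) else 0)
      + (\<Sum>u\<in>V. \<Sum>w\<in>V. if u = v then if w = v then t\<^sup>2 * R v v else 0 else 0)"
    by (simp only: sum.distrib)
  also have "(\<Sum>u\<in>V. \<Sum>w\<in>V. if u = v then t * (R v w * s w) else 0) = t * (\<Sum>w\<in>V. R v w * s w)"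
    using fin v by (simp add: sum.swap[of _ V V] sum_distrib_left)
  also have "(\<Sum>u\<in>V. \<Sum>w\<in>V. if w = v then t * (R v u * s u) else 0) = t * (\<Sum>w\<in>V. R v w * s w)"
    using fin v by (simp add: sum_distrib_left)
  also have "(\<Sum>u\<in>V. \<Sum>w\<in>V. if u = v then if w = v then t\<^sup>2 * R v v else 0 else 0) = t\<^sup>2 * R v v"
    using fin v by (simp add: sum.swap[of _ V V])
  finally show "0 \<le> 2 * t * (\<Sum>w\<in>V. R v w * s w) + t\<^sup>2 * R v v"
    using psd[of x] isotropic by simp
qed

lemma rank_one_sum_psd:
  fixes p :: "nat \<Rightarrow> real" and \<phi> :: "nat \<Rightarrow> 'a \<Rightarrow> complex"
  assumes p: "\<forall>t<n. 0 \<le> p t"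
    and M: "\<And>u w. u \<in> V \<Longrightarrow> w \<in> V \<Longrightarrow>
              M u w = (\<Sum>t<n. complex_of_real (p t) * (\<phi> t u * cnj (\<phi> t w)))"
  shows "0 \<le> (\<Sum>u\<in>V. \<Sum>w\<in>V. cnj (x u) * M u w * x w)"
proof -
  define z where "z t = (\<Sum>w\<in>V. cnj (\<phi> t w) * x w)" for t
  have cnj_z: "cnj (z t) = (\<Sum>u\<in>V. \<phi> t u * cnj (x u))" for t
    unfolding z_def by simp
  have "(\<Sum>u\<in>V. \<Sum>w\<in>V. cnj (x u) * M u w * x w) =
      (\<Sum>u\<in>V. \<Sum>w\<in>V. \<Sum>t<n. complex_of_real (p t) * ((\<phi> t u * cnj (x u)) * (cnj (\<phi> t w) * x w)))"
    by (intro sum.cong refl) (simp add: M sum_distrib_left sum_distrib_right algebra_simps)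
  also have "\<dots> = (\<Sum>t<n. \<Sum>u\<in>V. \<Sum>w\<in>V. complex_of_real (p t) * ((\<phi> t u * cnj (x u)) * (cnj (\<phi> t w) * x w)))"
    by (simp only: sum.swap[of _ V "{..<n}"])
  also have "\<dots> = (\<Sum>t<n. complex_of_real (p t) * (cnj (z t) * z t))"
    unfolding cnj_z unfolding z_def sum_product unfolding sum_distrib_left ..
  also have "\<dots> = complex_of_real (\<Sum>t<n. p t * (cmod (z t))\<^sup>2)"
    by (simp only: of_real_sum of_real_mult complex_norm_square mult.commute[of "cnj _"])
  finally have "(\<Sum>u\<in>V. \<Sum>w\<in>V. cnj (x u) * M u w * x w) = complex_of_real (\<Sum>t<n. p t * (cmod (z t))\<^sup>2)" .
  moreover have "0 \<le> (\<Sum>t<n. p t * (cmod (z t))\<^sup>2)"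
    using p by (intro sum_nonneg) simp
  ultimately show ?thesis
    by (simp add: less_eq_complex_def)
qed

section \<open>Partial transposition of edges and degree sums\<close>

lemma finite_grid [simp]: "finite (grid m1 m2)"
  by (simp add: grid_def)

lemma doubleton_in_ptrans_edges_iff:
  "{(i, j), (k, l)} \<in> ptrans_edges E \<longleftrightarrow> {(i, l), (k, j)} \<in> E"
proof
  assume "{(i, j), (k, l)} \<in> ptrans_edges E"
  then obtain i' j' k' l' where e: "{(i, j), (k, l)} = {(i', l'), (k', j')}"
    and mem: "{(i', j'), (k', l')} \<in> E"
    unfolding ptrans_edges_def by blast
  from e have "(i, j) = (i', l') \<and> (k, l) = (k', j') \<or> (i, j) = (k', j') \<and> (k, l) = (i', l')"
    by (simp add: doubleton_eq_iff)
  with mem show "{(i, l), (k, j)} \<in> E" by (auto simp: insert_commute)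
qed (auto simp: ptrans_edges_def)

lemma is_edge_on_grid_ptrans_edges:
  assumes "\<forall>e\<in>E. is_edge_on (grid m1 m2) e" and "e \<in> ptrans_edges E"
  shows "is_edge_on (grid m1 m2) e"
proof -
  from assms(2) obtain i j k l where e: "e = {(i, l), (k, j)}" and mem: "{(i, j), (k, l)} \<in> E"
    unfolding ptrans_edges_def by blast
  from assms(1) mem have "(i, j) \<in> grid m1 m2" "(k, l) \<in> grid m1 m2" "(i, j) \<noteq> (k, l)"
    unfolding is_edge_on_def by (auto simp: doubleton_eq_iff)
  then show ?thesis
    unfolding is_edge_on_def e by (auto simp: grid_def)
qed

lemma hybrid_graph_ptrans:
  assumes "hybrid_graph m1 m2 G"
  shows "hybrid_graph m1 m2 (ptrans G)"
proof -
  have "EL (ptrans G) \<inter> EQ (ptrans G) = {}"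
  proof (rule ccontr)
    assume "EL (ptrans G) \<inter> EQ (ptrans G) \<noteq> {}"
    then obtain e where "e \<in> ptrans_edges (EL G)" and e_Q: "e \<in> ptrans_edges (EQ G)"
      unfolding ptrans_def by auto
    then obtain i j k l where "e = {(i, l), (k, j)}" and "{(i, j), (k, l)} \<in> EL G"
      unfolding ptrans_edges_def by blast
    with e_Q have "{(i, j), (k, l)} \<in> EL G \<inter> EQ G"
      by (simp add: doubleton_in_ptrans_edges_iff)
    with assms show False
      unfolding hybrid_graph_def by blast
  qed
  with assms show ?thesis
    unfolding hybrid_graph_def by (auto simp: ptrans_def intro: is_edge_on_grid_ptrans_edges)
qed

lemma incident_edges_outside:
  assumes "\<forall>e\<in>E. is_edge_on V e" and "v \<notin> V"
  shows "{e\<in>E. v \<in> e} = {}"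
proof -
  have "v \<notin> e" if "e \<in> E" for e
  proof -
    from assms(1) that obtain a b where "a \<in> V" "b \<in> V" "e = {a, b}"
      unfolding is_edge_on_def by blast
    with assms(2) show ?thesis
      by auto
  qed
  then show ?thesis
    by blast
qed

lemma card_incident_edges_eq_card_neighbours:
  assumes "\<forall>e\<in>E. is_edge_on V e"
  shows "card {e\<in>E. v \<in> e} = card {w\<in>V. w \<noteq> v \<and> {v, w} \<in> E}"
proof -
  have "{e\<in>E. v \<in> e} = (\<lambda>w. {v, w}) ` {w\<in>V. w \<noteq> v \<and> {v, w} \<in> E}"
  proof
    show "{e\<in>E. v \<in> e} \<subseteq> (\<lambda>w. {v, w}) ` {w\<in>V. w \<noteq> v \<and> {v, w} \<in> E}"
    proof
      fix e assume e: "e \<in> {e\<in>E. v \<in> e}"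
      with assms obtain a b where "a \<in> V" "b \<in> V" "a \<noteq> b" "e = {a, b}"
        unfolding is_edge_on_def by blast
      moreover have "v = a \<or> v = b"
        using e \<open>e = {a, b}\<close> by blast
      ultimately obtain w where "w \<in> V" "w \<noteq> v" "e = {v, w}"
        by (metis insert_commute)
      with e show "e \<in> (\<lambda>w. {v, w}) ` {w\<in>V. w \<noteq> v \<and> {v, w} \<in> E}"
        by blast
    qed
  qed blast
  moreover have "inj_on (\<lambda>w. {v, w}) {w\<in>V. w \<noteq> v \<and> {v, w} \<in> E}"
    by (auto simp: inj_on_def doubleton_eq_iff)
  ultimately show ?thesis
    by (simp add: card_image)
qed

lemma sum_card_neighbours:
  assumes "finite V"
  shows "(\<Sum>v\<in>V. card {w\<in>V. w \<noteq> v \<and> {v, w} \<in> E}) = card {(v, w)\<in>V \<times> V. v \<noteq> w \<and> {v, w} \<in> E}"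
proof -
  have "{(v, w)\<in>V \<times> V. v \<noteq> w \<and> {v, w} \<in> E} = Sigma V (\<lambda>v. {w\<in>V. w \<noteq> v \<and> {v, w} \<in> E})"
    by auto
  with assms show ?thesis
    by (simp add: card_SigmaI)
qed

lemma card_adjacent_pairs_ptrans_edges:
  "card {(v, w)\<in>grid m1 m2 \<times> grid m1 m2. v \<noteq> w \<and> {v, w} \<in> ptrans_edges E}
   = card {(v, w)\<in>grid m1 m2 \<times> grid m1 m2. v \<noteq> w \<and> {v, w} \<in> E}"
proof -
  define swap_snd :: "(nat \<times> nat) \<times> (nat \<times> nat) \<Rightarrow> (nat \<times> nat) \<times> (nat \<times> nat)"
    where "swap_snd p = ((fst (fst p), snd (snd p)), (fst (snd p), snd (fst p)))" for p
  have "bij_betw swap_snd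
      {(v, w)\<in>grid m1 m2 \<times> grid m1 m2. v \<noteq> w \<and> {v, w} \<in> ptrans_edges E}
      {(v, w)\<in>grid m1 m2 \<times> grid m1 m2. v \<noteq> w \<and> {v, w} \<in> E}"
    by (rule bij_betw_byWitness[where f' = swap_snd])
      (auto simp: swap_snd_def grid_def doubleton_in_ptrans_edges_iff)
  then show ?thesis
    by (rule bij_betw_same_card)
qed

lemma hybrid_graph_edges_on_grid:
  assumes "hybrid_graph m1 m2 G"
  shows "\<forall>e\<in>EL G. is_edge_on (grid m1 m2) e" and "\<forall>e\<in>EQ G. is_edge_on (grid m1 m2) e"
  using assms unfolding hybrid_graph_def by auto

lemma deg_eq_card_neighbours:
  assumes "hybrid_graph m1 m2 G"
  shows "deg G v = card {w\<in>grid m1 m2. w \<noteq> v \<and> {v, w} \<in> EL G}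
                 + card {w\<in>grid m1 m2. w \<noteq> v \<and> {v, w} \<in> EQ G}"
  unfolding deg_def
  using card_incident_edges_eq_card_neighbours[OF hybrid_graph_edges_on_grid(1)[OF assms]]
    card_incident_edges_eq_card_neighbours[OF hybrid_graph_edges_on_grid(2)[OF assms]]
  by simp

lemma deg_outside_grid:
  assumes "hybrid_graph m1 m2 G" and "v \<notin> grid m1 m2"
  shows "deg G v = 0"
  unfolding deg_def
    incident_edges_outside[OF hybrid_graph_edges_on_grid(1)[OF assms(1)] assms(2)]
    incident_edges_outside[OF hybrid_graph_edges_on_grid(2)[OF assms(1)] assms(2)]
  by simp

lemma sum_card_incident_ptrans_edges:
  assumes "\<forall>e\<in>E. is_edge_on (grid m1 m2) e"
  shows "(\<Sum>v\<in>grid m1 m2. card {e\<in>ptrans_edges E. v \<in> e}) = (\<Sum>v\<in>grid m1 m2. card {e\<in>E. v \<in> e})"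
proof -
  have "\<forall>e\<in>ptrans_edges E. is_edge_on (grid m1 m2) e"
    using assms by (blast intro: is_edge_on_grid_ptrans_edges)
  then have "(\<Sum>v\<in>grid m1 m2. card {e\<in>ptrans_edges E. v \<in> e})
      = card {(v, w)\<in>grid m1 m2 \<times> grid m1 m2. v \<noteq> w \<and> {v, w} \<in> ptrans_edges E}"
    by (simp only: card_incident_edges_eq_card_neighbours sum_card_neighbours[OF finite_grid])
  also have "\<dots> = card {(v, w)\<in>grid m1 m2 \<times> grid m1 m2. v \<noteq> w \<and> {v, w} \<in> E}"
    by (rule card_adjacent_pairs_ptrans_edges)
  also have "\<dots> = (\<Sum>v\<in>grid m1 m2. card {e\<in>E. v \<in> e})"
    using assms by (simp only: card_incident_edges_eq_card_neighbours sum_card_neighbours[OF finite_grid])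
  finally show ?thesis .
qed

lemma sum_deg_ptrans:
  assumes "hybrid_graph m1 m2 G"
  shows "(\<Sum>v\<in>grid m1 m2. deg (ptrans G) v) = (\<Sum>v\<in>grid m1 m2. deg G v)"
  unfolding deg_def
  by (simp add: sum.distrib ptrans_def sum_card_incident_ptrans_edges hybrid_graph_edges_on_grid[OF assms])

definition partial_transpose :: "(nat \<times> nat \<Rightarrow> nat \<times> nat \<Rightarrow> 'a) \<Rightarrow> nat \<times> nat \<Rightarrow> nat \<times> nat \<Rightarrow> 'a" where
  "partial_transpose M u w = M (fst u, snd w) (fst w, snd u)"

lemma partial_transpose_sym:
  assumes "\<And>u w. M u w = M w u"
  shows "partial_transpose M u w = partial_transpose M w u"
  unfolding partial_transpose_def by (rule assms)

lemma hybrid_laplacian_sym: "hybrid_laplacian G u w = hybrid_laplacian G w u"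
  unfolding hybrid_laplacian_def degree_matrix_def by (auto simp: insert_commute)

lemma partial_transpose_hybrid_laplacian:
  "partial_transpose (hybrid_laplacian G) u w =
     hybrid_laplacian (ptrans G) u w + degree_matrix G u w - degree_matrix (ptrans G) u w"
proof -
  obtain i j k l where uw: "u = (i, j)" "w = (k, l)"
    by (cases u, cases w) auto
  have "(i, l) = (k, j) \<longleftrightarrow> u = w"
    using uw by auto
  then show ?thesis
    unfolding uw partial_transpose_def hybrid_laplacian_def degree_matrix_def ptrans_def
    by (auto simp: doubleton_in_ptrans_edges_iff)
qed

section \<open>Sign vectors in the kernel of the hybrid Laplacian\<close>

definition sign_balancing :: "hgraph \<Rightarrow> (nat \<times> nat \<Rightarrow> real) \<Rightarrow> bool" where
  "sign_balancing H s \<longleftrightarrow>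
     (\<forall>v. s v = 1 \<or> s v = -1) \<and>
     (\<forall>u v. {u, v} \<in> EL H \<longrightarrow> s v = s u) \<and>
     (\<forall>u v. {u, v} \<in> EQ H \<longrightarrow> s v = - s u)"

lemma sign_balancing_cut:
  assumes "\<And>u v. {u, v} \<in> EL H \<Longrightarrow> u \<in> P \<longleftrightarrow> v \<in> P"
    and "\<And>u v. {u, v} \<in> EQ H \<Longrightarrow> u \<in> P \<longleftrightarrow> v \<notin> P"
  shows "sign_balancing H (\<lambda>v. if v \<in> P then 1 else -1)"
  unfolding sign_balancing_def
proof (intro conjI allI impI)
  fix u v
  assume "{u, v} \<in> EL H"
  then have "u \<in> P \<longleftrightarrow> v \<in> P"
    by (rule assms(1))
  then show "(if v \<in> P then 1 else -1 :: real) = (if u \<in> P then 1 else -1)"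
    by simp
next
  fix u v
  assume "{u, v} \<in> EQ H"
  then have "u \<in> P \<longleftrightarrow> v \<notin> P"
    by (rule assms(2))
  then show "(if v \<in> P then 1 else -1 :: real) = - (if u \<in> P then 1 else -1)"
    by auto
qed simp

lemma q_bipartition_crossing:
  assumes "q_bipartition V H P1 P2" and "{u, v} \<in> EQ H"
  shows "u \<in> P1 \<longleftrightarrow> v \<notin> P1" and "u \<in> V" and "v \<in> V"
proof -
  from assms(1) have P: "P1 \<inter> P2 = {}" "P1 \<union> P2 = V"
    and crossing: "\<forall>e \<in> EQ H. \<exists>u \<in> P1. \<exists>v \<in> P2. e = {u, v}"
    unfolding q_bipartition_def by simp_all
  from crossing assms(2) obtain p1 p2 where p: "p1 \<in> P1" "p2 \<in> P2" "{u, v} = {p1, p2}"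
    by blast
  from p(3) have "u = p1 \<and> v = p2 \<or> u = p2 \<and> v = p1"
    by (simp add: doubleton_eq_iff)
  with p(1,2) P show "u \<in> P1 \<longleftrightarrow> v \<notin> P1" and "u \<in> V" and "v \<in> V"
    by blast+
qed

lemma NOI_graph_sign_balancing:
  assumes "NOI_graph m1 m2 H"
  obtains s where "sign_balancing H s"
proof -
  from assms obtain P1 P2 where bip: "q_bipartition (grid m1 m2) H P1 P2"
    and NOI: "\<forall>v \<in> grid m1 m2. \<not> ((\<exists>e \<in> EQ H. v \<in> e) \<and> (\<exists>e \<in> EL H. v \<in> e))"
    unfolding NOI_graph_def by blast
  \<comment> \<open>Vertices on L-edges carry no Q-edge, so moving them into P1 keeps the Q-edges crossing.\<close>
  define P where "P = P1 \<union> {v. \<exists>e \<in> EL H. v \<in> e}"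
  have "u \<in> P \<longleftrightarrow> v \<in> P" if "{u, v} \<in> EL H" for u v
    using that unfolding P_def by blast
  moreover have "u \<in> P \<longleftrightarrow> v \<notin> P" if uv: "{u, v} \<in> EQ H" for u v
  proof -
    have "\<not> (\<exists>e \<in> EL H. x \<in> e)" if "x \<in> {u, v}" for x
    proof -
      have "x \<in> grid m1 m2"
        using that q_bipartition_crossing(2,3)[OF bip uv] by blast
      moreover have "\<exists>e \<in> EQ H. x \<in> e"
        using that uv by blast
      ultimately show ?thesis
        using NOI by blast
    qed
    then show ?thesis
      unfolding P_def using q_bipartition_crossing(1)[OF bip uv] by blast
  qed
  ultimately have "sign_balancing H (\<lambda>v. if v \<in> P then 1 else -1)"
    by (rule sign_balancing_cut)
  then show ?thesis by (rule that)
qed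

lemma COI_graph_sign_balancing:
  assumes "COI_graph m1 m2 H"
  obtains s where "sign_balancing H s"
proof -
  from assms obtain P1 P2 where bip: "q_bipartition (grid m1 m2) H P1 P2"
    and COI: "\<forall>e \<in> EL H. (\<exists>u \<in> P1. \<exists>v \<in> P1. e = {u, v}) \<or> (\<exists>u \<in> P2. \<exists>v \<in> P2. e = {u, v})"
    unfolding COI_graph_def by (elim exE conjE)
  have "u \<in> P1 \<longleftrightarrow> v \<in> P1" if "{u, v} \<in> EL H" for u v
  proof -
    from COI that obtain a b where "a \<in> P1 \<and> b \<in> P1 \<or> a \<in> P2 \<and> b \<in> P2" "{u, v} = {a, b}"
      by blast
    moreover have "P1 \<inter> P2 = {}"
      using bip unfolding q_bipartition_def by simp
    ultimately show ?thesis
      by (auto simp: doubleton_eq_iff)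
  qed
  then have "sign_balancing H (\<lambda>v. if v \<in> P1 then 1 else -1)"
    using q_bipartition_crossing(1)[OF bip] by (rule sign_balancing_cut)
  then show ?thesis by (rule that)
qed

lemma hybrid_laplacian_sign_balancing_kernel:
  assumes "hybrid_graph m1 m2 H" and "sign_balancing H s" and v: "v \<in> grid m1 m2"
  shows "(\<Sum>w\<in>grid m1 m2. hybrid_laplacian H v w * s w) = 0"
proof -
  have "hybrid_laplacian H v w * s w =
      (if w = v then real (deg H v) * s v else 0)
      - (if w \<noteq> v \<and> {v, w} \<in> EL H then s v else 0)
      - (if w \<noteq> v \<and> {v, w} \<in> EQ H then s v else 0)" for w
  proof -
    have "s w = s v" if "{v, w} \<in> EL H"
      using assms(2) that unfolding sign_balancing_def by blast
    moreover have "s w = - s v" if "{v, w} \<in> EQ H"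
      using assms(2) that unfolding sign_balancing_def by blast
    moreover have "\<not> ({v, w} \<in> EL H \<and> {v, w} \<in> EQ H)"
      using assms(1) unfolding hybrid_graph_def by blast
    ultimately show ?thesis
      unfolding hybrid_laplacian_def degree_matrix_def by auto
  qed
  then have "(\<Sum>w\<in>grid m1 m2. hybrid_laplacian H v w * s w) =
      real (deg H v) * s v
      - real (card {w\<in>grid m1 m2. w \<noteq> v \<and> {v, w} \<in> EL H}) * s v
      - real (card {w\<in>grid m1 m2. w \<noteq> v \<and> {v, w} \<in> EQ H}) * s v"
    using v by (simp add: sum_subtractf sum.inter_filter[symmetric])
  also have "\<dots> = 0"
    using deg_eq_card_neighbours[OF assms(1)] by (simp add: algebra_simps)
  finally show ?thesis .
qed

section \<open>Separability\<close>

lemma separable_partial_transpose_rank_one_sum: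
  assumes "separable m1 m2 \<rho>"
  obtains n and p :: "nat \<Rightarrow> real" and \<phi> :: "nat \<Rightarrow> nat \<times> nat \<Rightarrow> complex"
  where "\<forall>t<n. 0 \<le> p t"
    and "\<And>u w. u \<in> grid m1 m2 \<Longrightarrow> w \<in> grid m1 m2 \<Longrightarrow>
           partial_transpose \<rho> u w = (\<Sum>t<n. complex_of_real (p t) * (\<phi> t u * cnj (\<phi> t w)))"
proof -
  from assms obtain n and p :: "nat \<Rightarrow> real" and a b :: "nat \<Rightarrow> nat \<Rightarrow> complex"
    where p: "\<forall>t<n. 0 \<le> p t"
      and \<rho>: "\<forall>i<m1. \<forall>j<m2. \<forall>k<m1. \<forall>l<m2.
        \<rho> (i, j) (k, l) = (\<Sum>t<n. complex_of_real (p t) * (a t i * b t j) * cnj (a t k * b t l))"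
    unfolding separable_def by blast
  define \<phi> where "\<phi> t u = a t (fst u) * cnj (b t (snd u))" for t u
  have "partial_transpose \<rho> u w = (\<Sum>t<n. complex_of_real (p t) * (\<phi> t u * cnj (\<phi> t w)))"
    if "u \<in> grid m1 m2" "w \<in> grid m1 m2" for u w
  proof -
    have "fst u < m1" "snd u < m2" "fst w < m1" "snd w < m2"
      using that by (auto simp: grid_def)
    with \<rho> have "partial_transpose \<rho> u w = (\<Sum>t<n. complex_of_real (p t) *
        (a t (fst u) * b t (snd w)) * cnj (a t (fst w) * b t (snd u)))"
      unfolding partial_transpose_def by blast
    then show ?thesis
      unfolding \<phi>_def by (simp add: algebra_simps)
  qed
  with p show ?thesis
    by (rule that)
qed

lemma separable_partial_transpose_psd:
  assumes "separable m1 m2 \<rho>"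
  shows "0 \<le> (\<Sum>u\<in>grid m1 m2. \<Sum>w\<in>grid m1 m2. cnj (x u) * partial_transpose \<rho> u w * x w)"
  by (rule separable_partial_transpose_rank_one_sum[OF assms], rule rank_one_sum_psd)

lemma partial_transpose_hybrid_laplacian_psd:
  assumes "separable m1 m2 (density m1 m2 G)" and "0 < (\<Sum>v\<in>grid m1 m2. deg G v)"
  shows "0 \<le> (\<Sum>u\<in>grid m1 m2. \<Sum>w\<in>grid m1 m2. x u * partial_transpose (hybrid_laplacian G) u w * x w)"
    (is "0 \<le> ?Q")
proof -
  define T where "T = (\<Sum>v\<in>grid m1 m2. hybrid_laplacian G v v)"
  have "T = real (\<Sum>v\<in>grid m1 m2. deg G v)"
    unfolding T_def hybrid_laplacian_def degree_matrix_def by simp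
  with assms(2) have "0 < T"
    by (simp only: of_nat_0_less_iff)
  have "partial_transpose (density m1 m2 G) u w
      = complex_of_real (partial_transpose (hybrid_laplacian G) u w / T)" for u w
    unfolding partial_transpose_def density_def T_def ..
  then have "(\<Sum>u\<in>grid m1 m2. \<Sum>w\<in>grid m1 m2. cnj (complex_of_real (x u))
        * partial_transpose (density m1 m2 G) u w * complex_of_real (x w))
      = complex_of_real (\<Sum>u\<in>grid m1 m2. \<Sum>w\<in>grid m1 m2.
        x u * (partial_transpose (hybrid_laplacian G) u w / T) * x w)"
    by simp
  also have "\<dots> = complex_of_real (?Q / T)"
    by (simp add: sum_divide_distrib)
  finally have "0 \<le> ?Q / T"
    using separable_partial_transpose_psd[OF assms(1), of "\<lambda>u. complex_of_real (x u)"]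
    by (simp add: less_eq_complex_def)
  with \<open>0 < T\<close> show ?thesis
    by (simp add: zero_le_divide_iff)
qed

lemma deg_ptrans_eq_if_partial_transpose_psd:
  assumes G: "hybrid_graph m1 m2 G" and s: "sign_balancing (ptrans G) s"
    and psd: "\<And>x. 0 \<le> (\<Sum>u\<in>grid m1 m2. \<Sum>w\<in>grid m1 m2.
                        x u * partial_transpose (hybrid_laplacian G) u w * x w)"
    and v: "v \<in> grid m1 m2"
  shows "deg (ptrans G) v = deg G v"
proof -
  let ?V = "grid m1 m2" and ?R = "partial_transpose (hybrid_laplacian G)"
  have s_sq: "s u * s u = 1" for u
    using s unfolding sign_balancing_def by (metis mult_1 mult_minus1 minus_minus)
  have R_s: "(\<Sum>w\<in>?V. ?R u w * s w) = (real (deg G u) - real (deg (ptrans G) u)) * s u"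
    if u: "u \<in> ?V" for u
  proof -
    have "(\<Sum>w\<in>?V. ?R u w * s w) = (\<Sum>w\<in>?V. hybrid_laplacian (ptrans G) u w * s w)
        + (\<Sum>w\<in>?V. (degree_matrix G u w - degree_matrix (ptrans G) u w) * s w)"
      unfolding sum.distrib[symmetric] partial_transpose_hybrid_laplacian
      by (simp add: algebra_simps)
    also have "\<dots> = (\<Sum>w\<in>?V. if u = w then (real (deg G u) - real (deg (ptrans G) u)) * s u else 0)"
      unfolding hybrid_laplacian_sign_balancing_kernel[OF hybrid_graph_ptrans[OF G] s u] add_0_left
      by (intro sum.cong refl) (simp add: degree_matrix_def)
    also have "\<dots> = (real (deg G u) - real (deg (ptrans G) u)) * s u"
      using u by simp
    finally show ?thesis .
  qed
  have "(\<Sum>u\<in>?V. \<Sum>w\<in>?V. s u * ?R u w * s w) = (\<Sum>u\<in>?V. s u * (\<Sum>w\<in>?V. ?R u w * s w))"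
    by (simp add: sum_distrib_left mult.assoc)
  also have "\<dots> = (\<Sum>u\<in>?V. real (deg G u) - real (deg (ptrans G) u))"
  proof (intro sum.cong refl)
    fix u assume "u \<in> ?V"
    then have "s u * (\<Sum>w\<in>?V. ?R u w * s w) = (real (deg G u) - real (deg (ptrans G) u)) * (s u * s u)"
      by (simp add: R_s)
    then show "s u * (\<Sum>w\<in>?V. ?R u w * s w) = real (deg G u) - real (deg (ptrans G) u)"
      by (simp add: s_sq)
  qed
  also have "\<dots> = 0"
    using sum_deg_ptrans[OF G] by (simp add: sum_subtractf flip: of_nat_sum)
  finally have "(\<Sum>w\<in>?V. ?R v w * s w) = 0"
    using psd_isotropic_in_kernel[OF finite_grid v partial_transpose_sym[OF hybrid_laplacian_sym] psd]
    by blast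
  with R_s[OF v] s_sq[of v] show ?thesis
    by auto
qed

lemma deg_ptrans_eq_on_grid:
  assumes G: "hybrid_graph m1 m2 G" and sep: "separable m1 m2 (density m1 m2 G)"
    and s: "sign_balancing (ptrans G) s" and v: "v \<in> grid m1 m2"
  shows "deg (ptrans G) v = deg G v"
proof (cases "(\<Sum>v\<in>grid m1 m2. deg G v) = 0")
  case True
  \<comment> \<open>Then the trace vanishes, the density matrix is the zero matrix (division by zero)
    and separability carries no information; the degree sums decide this case.\<close>
  then have "(\<Sum>v\<in>grid m1 m2. deg (ptrans G) v) = 0"
    using sum_deg_ptrans[OF G] by simp
  with True v show ?thesis
    by (simp add: sum_eq_0_iff)
next
  case False
  then have "0 < (\<Sum>v\<in>grid m1 m2. deg G v)"
    by (simp only: neq0_conv)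
  then show ?thesis
    by (intro deg_ptrans_eq_if_partial_transpose_psd[OF G s _ v]
        partial_transpose_hybrid_laplacian_psd[OF sep])
qed

theorem theorem3:
  fixes m1 m2 :: nat and G :: hgraph
  assumes "hybrid_graph m1 m2 G"
    and "separable m1 m2 (density m1 m2 G)"
    and "NOI_graph m1 m2 (ptrans G) \<or> COI_graph m1 m2 (ptrans G)"
  shows "degree_matrix G = degree_matrix (ptrans G)"
proof -
  obtain s where s: "sign_balancing (ptrans G) s"
    using assms(3) NOI_graph_sign_balancing COI_graph_sign_balancing by blast
  have "deg (ptrans G) v = deg G v" for v
  proof (cases "v \<in> grid m1 m2")
    case True
    then show ?thesis
      by (rule deg_ptrans_eq_on_grid[OF assms(1,2) s])
  next
    case False
    then show ?thesis
      using deg_outside_grid assms(1) hybrid_graph_ptrans by metis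
  qed
  then show ?thesis
    unfolding degree_matrix_def by (intro ext) simp
qed

end
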